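(* Let $\mathcal{D}$ be a distribution over $\mathcal{X}\times\{0,1\}$, let $h:\mathcal{X}\to[0,1]$ be a hypothesis, and let $f_1,f_2:[0,1]\to\mathbb{R}$ be such that the loss is $\ell(h(x),y)=f_1(h(x))+y\,f_2(h(x))$, with $\mathbb{E}_x[f_1(h(x))]$ and $\mathbb{E}_x[f_2(h(x))]$ finite. Let $(x_1,y_1),\ldots,(x_k,y_k)$ be drawn i.i.d. from $\mathcal{D}$, let $\alpha=\frac1k\sum_{i=1}^k y_i$, and let $z=((x_1,\ldots,x_k),\alpha)$ be the corresponding bag. Let $p=\mathbb{E}[y]$ and define the bag-level loss $$\ell_b(h,z)=\mathbb{E}_x\big[f_1(h(x))+p\,f_2(h(x))\big]+(\alpha-p)\Big(\sum_{i=1}^k f_2(h(x_i))-k\,\mathbb{E}_x[f_2(h(x))]\Big).$$ Then $$\mathbb{E}_z[\ell_b(h,z)]=\mathbb{E}_{(x,y)\sim\mathcal{D}}[\ell(h(x),y)],\qquad \mathrm{Var}_z(\ell_b(h,z))\le \frac52\,\mathbb{E}_x\big[(f_2(h(x)))^2\big].$$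
   Context: Here $x$ denotes a random feature vector distributed as the $\mathcal{X}$-marginal of $\mathcal{D}$, and $(x,y)\sim\mathcal{D}$. Every loss depending on a binary label can be written in the form $f_1(h(x))+y f_2(h(x))$ with $f_1(a)=\ell(a,0)$, $f_2(a)=\ell(a,1)-\ell(a,0)$. *)

theory Defs
  imports "HOL-Probability.Probability"
begin

text \<open>Label y is encoded as a bool; its numeric value is of_bool y (0 or 1).
  A sample of k i.i.d. draws is a function s :: nat => ('a * bool) on {..<k},
  distributed according to PiM {..<k} (%_. D).\<close>

definition label_mean :: "('a \<times> bool) measure \<Rightarrow> real" where
  "label_mean D = (\<integral>w. of_bool (snd w) \<partial>D)"

definition bag_label :: "nat \<Rightarrow> (nat \<Rightarrow> 'a \<times> bool) \<Rightarrow> real" where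
  "bag_label k s = (\<Sum>i<k. of_bool (snd (s i))) / real k"

definition bag_loss ::
  "('a \<times> bool) measure \<Rightarrow> (real \<Rightarrow> real) \<Rightarrow> (real \<Rightarrow> real) \<Rightarrow> ('a \<Rightarrow> real)
    \<Rightarrow> nat \<Rightarrow> (nat \<Rightarrow> 'a \<times> bool) \<Rightarrow> real" where
  "bag_loss D f1 f2 h k s =
     (let p = label_mean D in
      (\<integral>w. f1 (h (fst w)) + p * f2 (h (fst w)) \<partial>D)
      + (bag_label k s - p) *
        ((\<Sum>i<k. f2 (h (fst (s i)))) - real k * (\<integral>w. f2 (h (fst w)) \<partial>D)))"

end

theory Submission
  imports Defs
begin

text \<open>
  Write \<open>y\<close> for the label, \<open>p = E y\<close>, \<open>g = f\<^sub>2 \<circ> h\<close>, \<open>\<mu> = E g\<close>, and centre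
  \<open>a = y - p\<close>, \<open>b = g - \<mu>\<close>. The bag loss is then the constant \<open>E[f\<^sub>1 + p g]\<close> plus
  \<open>(\<Sum>\<^sub>i a\<^sub>i)(\<Sum>\<^sub>j b\<^sub>j) / k\<close>, where \<open>(a\<^sub>i, b\<^sub>i)\<close> are i.i.d. centred pairs. In expectation only
  the diagonal terms survive, giving \<open>E[ab] = E[yg] - p\<mu>\<close> and hence the risk. For the variance,
  the fourth moment \<open>E[(\<Sum>\<^sub>i a\<^sub>i)\<^sup>2 (\<Sum>\<^sub>j b\<^sub>j)\<^sup>2]\<close> only retains the index patterns in which
  every index occurs at least twice; together with \<open>|a| \<le> 1\<close> this bounds the variance by
  \<open>(2 - 1/k) E[b\<^sup>2] \<le> 2 E[g\<^sup>2]\<close>.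
\<close>

lemma (in prob_space)
  fixes F :: "'i \<Rightarrow> 'a \<Rightarrow> real"
  assumes "finite I" and "\<And>m. m \<in> I \<Longrightarrow> integrable M (F m)"
  shows integrable_PiM_coordinate_prod: "integrable (PiM I (\<lambda>_. M)) (\<lambda>s. \<Prod>m\<in>I. F m (s m))"
    and integral_PiM_coordinate_prod:
      "(\<integral>s. (\<Prod>m\<in>I. F m (s m)) \<partial>PiM I (\<lambda>_. M)) = (\<Prod>m\<in>I. expectation (F m))"
proof -
  interpret product_sigma_finite "\<lambda>_. M"
    by (simp add: product_sigma_finite_def sigma_finite_measure_axioms)
  show "integrable (PiM I (\<lambda>_. M)) (\<lambda>s. \<Prod>m\<in>I. F m (s m))"
    using assms by (rule product_integrable_prod)
  show "(\<integral>s. (\<Prod>m\<in>I. F m (s m)) \<partial>PiM I (\<lambda>_. M)) = (\<Prod>m\<in>I. expectation (F m))"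
    using assms by (rule product_integral_prod)
qed

locale bounded_centred_pair = prob_space M for M :: "'a measure" +
  fixes a b :: "'a \<Rightarrow> real"
  assumes a_measurable [measurable]: "a \<in> borel_measurable M"
    and abs_a_le_1: "\<And>w. w \<in> space M \<Longrightarrow> \<bar>a w\<bar> \<le> 1"
    and integrable_b: "integrable M b"
    and expectation_a: "expectation a = 0"
    and expectation_b: "expectation b = 0"
begin

lemma b_measurable [measurable]: "b \<in> borel_measurable M"
  using integrable_b by blast

lemma integrable_a: "integrable M a"
  by (rule integrable_const_bound[of _ 1]) (auto simp: abs_a_le_1)

lemma integrable_a_times:
  assumes "integrable M f"
  shows "integrable M (\<lambda>w. a w * f w)"
  using assms by (intro Bochner_Integration.integrable_bound[OF assms(1)])
    (auto simp: abs_mult intro!: AE_I2 mult_left_le_one_le abs_a_le_1)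

lemma
  assumes "finite I" "i \<in> I" "j \<in> I"
  shows integrable_coordinate_mult: "integrable (PiM I (\<lambda>_. M)) (\<lambda>s. a (s i) * b (s j))"
    and integral_coordinate_mult:
      "(\<integral>s. a (s i) * b (s j) \<partial>PiM I (\<lambda>_. M)) = (if i = j then expectation (\<lambda>w. a w * b w) else 0)"
      (is "?E = ?V")
proof -
  define F where "F = (\<lambda>m w. (if m = i then a w else 1) * (if m = j then b w else 1))"
  have F_integrable: "integrable M (F m)" for m
    unfolding F_def by (cases "m = i"; cases "m = j")
      (auto simp: integrable_a integrable_b integrable_a_times)
  have prod_F: "a (s i) * b (s j) = (\<Prod>m\<in>I. F m (s m))" for s
    using assms by (simp add: F_def prod.distrib)
  show "integrable (PiM I (\<lambda>_. M)) (\<lambda>s. a (s i) * b (s j))"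
    unfolding prod_F using assms(1) F_integrable by (rule integrable_PiM_coordinate_prod)
  have "?E = (\<Prod>m\<in>I. expectation (F m))"
    unfolding prod_F using assms(1) F_integrable by (rule integral_PiM_coordinate_prod)
  also have "\<dots> = (\<Prod>m\<in>{i, j}. expectation (F m))"
    using assms by (intro prod.mono_neutral_right) (auto simp: F_def prob_space)
  also have "\<dots> = ?V"
    by (auto simp: F_def expectation_a expectation_b)
  finally show "?E = ?V" .
qed

text \<open>Each of the three pairings of the indices also counts the diagonal \<open>i = i' = j = j'\<close>,
  which the last term corrects.\<close>

lemma
  assumes b_sq: "integrable M (\<lambda>w. (b w)\<^sup>2)"
    and I: "finite I" "i \<in> I" "i' \<in> I" "j \<in> I" "j' \<in> I"
  defines "x \<equiv> expectation (\<lambda>w. (a w * b w)\<^sup>2)"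
    and "y \<equiv> expectation (\<lambda>w. (a w)\<^sup>2) * expectation (\<lambda>w. (b w)\<^sup>2)"
    and "z \<equiv> (expectation (\<lambda>w. a w * b w))\<^sup>2"
  shows integrable_coordinate_mult4:
      "integrable (PiM I (\<lambda>_. M)) (\<lambda>s. a (s i) * a (s i') * b (s j) * b (s j'))"
    and integral_coordinate_mult4:
      "(\<integral>s. a (s i) * a (s i') * b (s j) * b (s j') \<partial>PiM I (\<lambda>_. M)) =
        of_bool (i = i') * of_bool (j = j') * y + of_bool (i = j) * of_bool (i' = j') * z
        + of_bool (i = j') * of_bool (i' = j) * z
        + of_bool (i = i') * of_bool (i = j) * of_bool (i = j') * (x - y - 2 * z)"
      (is "?E = ?V")
proof -
  define F where "F = (\<lambda>m w. (if m = i then a w else 1) * (if m = i' then a w else 1)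
     * (if m = j then b w else 1) * (if m = j' then b w else 1))"
  have bb: "integrable M (\<lambda>w. b w * b w)"
    using b_sq by (simp add: power2_eq_square)
  have F_integrable: "integrable M (F m)" for m
    unfolding F_def by (cases "m = i"; cases "m = i'"; cases "m = j"; cases "m = j'")
      (auto simp: mult.assoc integrable_a integrable_b bb intro!: integrable_a_times)
  have prod_F: "a (s i) * a (s i') * b (s j) * b (s j') = (\<Prod>m\<in>I. F m (s m))" for s
    using I by (simp add: F_def prod.distrib)
  show "integrable (PiM I (\<lambda>_. M)) (\<lambda>s. a (s i) * a (s i') * b (s j) * b (s j'))"
    unfolding prod_F using I(1) F_integrable by (rule integrable_PiM_coordinate_prod)
  have "?E = (\<Prod>m\<in>I. expectation (F m))"
    unfolding prod_F using I(1) F_integrable by (rule integral_PiM_coordinate_prod)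
  also have "\<dots> = (\<Prod>m\<in>{i, i', j, j'}. expectation (F m))"
    using I by (intro prod.mono_neutral_right) (auto simp: F_def prob_space)
  also have "\<dots> = ?V"
    unfolding x_def y_def z_def
    by (cases "i = i'"; cases "i = j"; cases "i = j'"; cases "i' = j"; cases "i' = j'"; cases "j = j'")
      (auto simp: F_def expectation_a expectation_b insert_commute power2_eq_square mult_ac)
  finally show "?E = ?V" .
qed

lemma
  assumes "finite I"
  shows integrable_sum_mult_sum: "integrable (PiM I (\<lambda>_. M)) (\<lambda>s. (\<Sum>i\<in>I. a (s i)) * (\<Sum>j\<in>I. b (s j)))"
    and integral_sum_mult_sum: "(\<integral>s. (\<Sum>i\<in>I. a (s i)) * (\<Sum>j\<in>I. b (s j)) \<partial>PiM I (\<lambda>_. M))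
      = card I * expectation (\<lambda>w. a w * b w)" (is "?E = ?V")
proof -
  have expand: "(\<Sum>i\<in>I. a (s i)) * (\<Sum>j\<in>I. b (s j)) = (\<Sum>i\<in>I. \<Sum>j\<in>I. a (s i) * b (s j))" for s
    by (simp add: sum_product)
  show "integrable (PiM I (\<lambda>_. M)) (\<lambda>s. (\<Sum>i\<in>I. a (s i)) * (\<Sum>j\<in>I. b (s j)))"
    unfolding expand using assms by (intro Bochner_Integration.integrable_sum integrable_coordinate_mult)
  show "?E = ?V"
    unfolding expand using assms
    by (simp add: Bochner_Integration.integral_sum Bochner_Integration.integrable_sum
        integrable_coordinate_mult integral_coordinate_mult)
qed

lemma
  assumes b_sq: "integrable M (\<lambda>w. (b w)\<^sup>2)" and I: "finite I"
  defines "x \<equiv> expectation (\<lambda>w. (a w * b w)\<^sup>2)"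
    and "y \<equiv> expectation (\<lambda>w. (a w)\<^sup>2) * expectation (\<lambda>w. (b w)\<^sup>2)"
    and "z \<equiv> (expectation (\<lambda>w. a w * b w))\<^sup>2"
  shows integrable_sq_sum_mult_sq_sum:
      "integrable (PiM I (\<lambda>_. M)) (\<lambda>s. (\<Sum>i\<in>I. a (s i))\<^sup>2 * (\<Sum>j\<in>I. b (s j))\<^sup>2)"
    and integral_sq_sum_mult_sq_sum:
      "(\<integral>s. (\<Sum>i\<in>I. a (s i))\<^sup>2 * (\<Sum>j\<in>I. b (s j))\<^sup>2 \<partial>PiM I (\<lambda>_. M))
        = real (card I) * x + real (card I) * (real (card I) - 1) * (y + 2 * z)" (is "?E = ?V")
proof -
  have expand: "(\<Sum>i\<in>I. a (s i))\<^sup>2 * (\<Sum>j\<in>I. b (s j))\<^sup>2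
      = (\<Sum>i\<in>I. \<Sum>j\<in>I. \<Sum>i'\<in>I. \<Sum>j'\<in>I. a (s i) * a (s i') * b (s j) * b (s j'))" for s
  proof -
    have sq_sum: "(\<Sum>i\<in>I. f i)\<^sup>2 = (\<Sum>i\<in>I. \<Sum>i'\<in>I. f i * f i')" for f :: "_ \<Rightarrow> real"
      by (simp add: power2_eq_square sum_product)
    show ?thesis
      unfolding sq_sum sum_product by (simp add: mult.assoc)
  qed
  show "integrable (PiM I (\<lambda>_. M)) (\<lambda>s. (\<Sum>i\<in>I. a (s i))\<^sup>2 * (\<Sum>j\<in>I. b (s j))\<^sup>2)"
    unfolding expand using b_sq I by (intro Bochner_Integration.integrable_sum integrable_coordinate_mult4)
  have "?E = (\<Sum>i\<in>I. \<Sum>j\<in>I. \<Sum>i'\<in>I. \<Sum>j'\<in>I.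
      \<integral>s. a (s i) * a (s i') * b (s j) * b (s j') \<partial>PiM I (\<lambda>_. M))"
    unfolding expand using b_sq I
    by (simp add: Bochner_Integration.integral_sum Bochner_Integration.integrable_sum
        integrable_coordinate_mult4)
  also have "\<dots> = (\<Sum>i\<in>I. \<Sum>j\<in>I. \<Sum>i'\<in>I. \<Sum>j'\<in>I.
      of_bool (i = i') * of_bool (j = j') * y + of_bool (i = j) * of_bool (i' = j') * z
      + of_bool (i = j') * of_bool (i' = j) * z
      + of_bool (i = i') * of_bool (i = j) * of_bool (i = j') * (x - y - 2 * z))"
    using b_sq I by (simp add: integral_coordinate_mult4 x_def y_def z_def)
  also have "\<dots> = ?V"
    using I
    by (simp add: sum.distrib sum_distrib_left[symmetric] sum_distrib_right[symmetric])
      (simp add: algebra_simps)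
  finally show "?E = ?V" .
qed

definition bag_statistic :: "'i set \<Rightarrow> ('i \<Rightarrow> 'a) \<Rightarrow> real" where
  "bag_statistic I s = (\<Sum>i\<in>I. a (s i)) * (\<Sum>j\<in>I. b (s j)) / card I"

lemma
  assumes "finite I" "I \<noteq> {}"
  shows integrable_bag_statistic: "integrable (PiM I (\<lambda>_. M)) (bag_statistic I)"
    and integral_bag_statistic:
      "(\<integral>s. bag_statistic I s \<partial>PiM I (\<lambda>_. M)) = expectation (\<lambda>w. a w * b w)"
  using assms integrable_sum_mult_sum[OF assms(1)] integral_sum_mult_sum[OF assms(1)]
  by (simp_all add: bag_statistic_def[abs_def])

lemma
  assumes b_sq: "integrable M (\<lambda>w. (b w)\<^sup>2)" and I: "finite I" "I \<noteq> {}"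
  defines "c \<equiv> expectation (\<lambda>w. a w * b w)" and "n \<equiv> real (card I)"
    and "x \<equiv> expectation (\<lambda>w. (a w * b w)\<^sup>2)"
    and "y \<equiv> expectation (\<lambda>w. (a w)\<^sup>2) * expectation (\<lambda>w. (b w)\<^sup>2)"
  shows integrable_bag_statistic_variance:
      "integrable (PiM I (\<lambda>_. M)) (\<lambda>s. (bag_statistic I s - c)\<^sup>2)"
    and integral_bag_statistic_variance:
      "(\<integral>s. (bag_statistic I s - c)\<^sup>2 \<partial>PiM I (\<lambda>_. M))
        = x / n + (1 - 1 / n) * y + (1 - 2 / n) * c\<^sup>2" (is "?E = ?V")
proof -
  interpret S: prob_space "PiM I (\<lambda>_. M)"
    by (simp add: prob_space_PiM prob_space_axioms)
  define Q where "Q s = (\<Sum>i\<in>I. a (s i))\<^sup>2 * (\<Sum>j\<in>I. b (s j))\<^sup>2" for s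
  have n_pos: "n > 0"
    using I by (simp add: n_def card_gt_0_iff)
  have expand: "(bag_statistic I s - c)\<^sup>2 = Q s / n\<^sup>2 - 2 * c * bag_statistic I s + c\<^sup>2" for s
    using n_pos by (simp add: bag_statistic_def Q_def n_def power2_eq_square field_simps)
  have Q: "integrable (PiM I (\<lambda>_. M)) Q"
    unfolding Q_def using b_sq I(1) by (rule integrable_sq_sum_mult_sq_sum)
  show "integrable (PiM I (\<lambda>_. M)) (\<lambda>s. (bag_statistic I s - c)\<^sup>2)"
    unfolding expand using Q integrable_bag_statistic[OF I] by simp
  have "?E = S.expectation Q / n\<^sup>2 - c\<^sup>2"
    unfolding expand using Q integrable_bag_statistic[OF I]
    by (simp add: integral_bag_statistic[OF I] c_def S.prob_space power2_eq_square)
  also have "\<dots> = ?V"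
    unfolding Q_def integral_sq_sum_mult_sq_sum[OF b_sq I(1)]
    using n_pos by (simp add: n_def x_def y_def c_def field_simps power2_eq_square)
  finally show "?E = ?V" .
qed

lemma integral_bag_statistic_variance_le:
  assumes b_sq: "integrable M (\<lambda>w. (b w)\<^sup>2)" and I: "finite I" "I \<noteq> {}"
  shows "(\<integral>s. (bag_statistic I s - expectation (\<lambda>w. a w * b w))\<^sup>2 \<partial>PiM I (\<lambda>_. M))
    \<le> 2 * expectation (\<lambda>w. (b w)\<^sup>2)"
proof -
  define n where "n = real (card I)"
  define x where "x = expectation (\<lambda>w. (a w * b w)\<^sup>2)"
  define y where "y = expectation (\<lambda>w. (a w)\<^sup>2) * expectation (\<lambda>w. (b w)\<^sup>2)"
  define z where "z = (expectation (\<lambda>w. a w * b w))\<^sup>2"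
  define v where "v = expectation (\<lambda>w. (b w)\<^sup>2)"
  have n_ge_1: "n \<ge> 1"
    using I by (simp add: n_def Suc_le_eq card_gt_0_iff)
  have a_sq_le_1: "(a w)\<^sup>2 \<le> 1" if "w \<in> space M" for w
    using abs_a_le_1[OF that] by (simp add: abs_le_square_iff[of _ 1, simplified])
  have ab: "integrable M (\<lambda>w. a w * b w)"
    by (simp add: integrable_a_times integrable_b)
  have ab_sq: "integrable M (\<lambda>w. (a w * b w)\<^sup>2)"
    using integrable_a_times[OF integrable_a_times[OF b_sq]]
    by (simp add: power2_eq_square mult_ac)
  have a_sq: "integrable M (\<lambda>w. (a w)\<^sup>2)"
    using integrable_a_times[OF integrable_a] by (simp add: power2_eq_square)
  have "0 \<le> z" "0 \<le> v" "0 \<le> 1 - 1 / n"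
    using n_ge_1 by (simp_all add: z_def v_def)
  have y_le_v: "y \<le> v"
  proof -
    have "expectation (\<lambda>w. (a w)\<^sup>2) \<le> 1"
      using integral_mono[OF a_sq, of "\<lambda>_. 1"] a_sq_le_1 by (simp add: prob_space)
    then show ?thesis
      unfolding y_def v_def using \<open>0 \<le> v\<close> v_def by (simp add: mult_left_le_one_le)
  qed
  have x_le_v: "x \<le> v"
    unfolding x_def v_def
  proof (rule integral_mono[OF ab_sq b_sq])
    show "(a w * b w)\<^sup>2 \<le> (b w)\<^sup>2" if "w \<in> space M" for w
      using mult_right_mono[OF a_sq_le_1[OF that], of "(b w)\<^sup>2"] by (simp add: power_mult_distrib)
  qed
  have z_le_x: "z \<le> x"
    using variance_positive[of "\<lambda>w. a w * b w"] variance_eq[OF ab ab_sq] by (simp add: x_def z_def)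
  have "(1 - 2 / n) * z \<le> (1 - 1 / n) * z"
    using \<open>0 \<le> z\<close> n_ge_1 by (intro mult_right_mono) (auto simp: divide_right_mono)
  also have "\<dots> \<le> (1 - 1 / n) * v"
    using \<open>0 \<le> 1 - 1 / n\<close> z_le_x x_le_v by (intro mult_left_mono) auto
  finally have "x / n + (1 - 1 / n) * y + (1 - 2 / n) * z \<le> v / n + (1 - 1 / n) * v + (1 - 1 / n) * v"
    using x_le_v y_le_v n_ge_1 \<open>0 \<le> 1 - 1 / n\<close>
    by (intro add_mono divide_right_mono mult_left_mono) auto
  also have "\<dots> \<le> 2 * v"
    using n_ge_1 \<open>0 \<le> v\<close> by (simp add: field_simps)
  finally show ?thesis
    using integral_bag_statistic_variance[OF b_sq I] by (simp add: n_def x_def y_def v_def z_def)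
qed

lemma nn_integral_bag_statistic_variance_le:
  assumes "finite I" "I \<noteq> {}"
  shows "(\<integral>\<^sup>+s. ennreal ((bag_statistic I s - expectation (\<lambda>w. a w * b w))\<^sup>2) \<partial>PiM I (\<lambda>_. M))
    \<le> 2 * (\<integral>\<^sup>+w. ennreal ((b w)\<^sup>2) \<partial>M)"
proof (cases "(\<integral>\<^sup>+w. ennreal ((b w)\<^sup>2) \<partial>M) = \<infinity>")
  case False
  then have b_sq: "integrable M (\<lambda>w. (b w)\<^sup>2)"
    by (intro integrableI_bounded) (auto simp: top.not_eq_extremum)
  have "(\<integral>\<^sup>+s. ennreal ((bag_statistic I s - expectation (\<lambda>w. a w * b w))\<^sup>2) \<partial>PiM I (\<lambda>_. M))
      = ennreal (\<integral>s. (bag_statistic I s - expectation (\<lambda>w. a w * b w))\<^sup>2 \<partial>PiM I (\<lambda>_. M))"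
    using integrable_bag_statistic_variance[OF b_sq assms] by (simp add: nn_integral_eq_integral)
  also have "\<dots> \<le> ennreal (2 * expectation (\<lambda>w. (b w)\<^sup>2))"
    using integral_bag_statistic_variance_le[OF b_sq assms] by (rule ennreal_leI)
  also have "\<dots> = 2 * (\<integral>\<^sup>+w. ennreal ((b w)\<^sup>2) \<partial>M)"
    using b_sq by (simp add: nn_integral_eq_integral ennreal_mult)
  finally show ?thesis .
qed (simp add: ennreal_mult_top)

end

lemma (in prob_space) nn_integral_centred_sq_le:
  assumes "integrable M g"
  shows "(\<integral>\<^sup>+w. ennreal ((g w - expectation g)\<^sup>2) \<partial>M) \<le> (\<integral>\<^sup>+w. ennreal ((g w)\<^sup>2) \<partial>M)"
proof (cases "(\<integral>\<^sup>+w. ennreal ((g w)\<^sup>2) \<partial>M) = \<infinity>")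
  case False
  then have g_sq: "integrable M (\<lambda>w. (g w)\<^sup>2)"
    using assms by (intro integrableI_bounded) (auto simp: top.not_eq_extremum)
  then have "integrable M (\<lambda>w. (g w - expectation g)\<^sup>2)"
    using assms by (simp add: power2_diff)
  then have "(\<integral>\<^sup>+w. ennreal ((g w - expectation g)\<^sup>2) \<partial>M) = ennreal (variance g)"
    by (simp add: nn_integral_eq_integral)
  also have "\<dots> \<le> ennreal (expectation (\<lambda>w. (g w)\<^sup>2))"
    using variance_eq[OF assms g_sq] by (intro ennreal_leI) simp
  also have "\<dots> = (\<integral>\<^sup>+w. ennreal ((g w)\<^sup>2) \<partial>M)"
    using g_sq by (simp add: nn_integral_eq_integral)
  finally show ?thesis .
qed simp

lemma bounded_centred_pair_label:
  assumes "prob_space D" and [measurable]: "(\<lambda>w. of_bool (snd w) :: real) \<in> borel_measurable D"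
    and "integrable D g"
  shows "bounded_centred_pair D (\<lambda>w. of_bool (snd w) - label_mean D) (\<lambda>w. g w - (\<integral>w. g w \<partial>D))"
proof -
  interpret prob_space D by fact
  have label: "integrable D (\<lambda>w. of_bool (snd w) :: real)"
    by (rule integrable_const_bound[of _ 1]) auto
  have "0 \<le> label_mean D" "label_mean D \<le> 1"
    unfolding label_mean_def
    using integral_mono[OF label, of "\<lambda>_. 1"] by (auto simp: prob_space)
  then show ?thesis
    using label assms(3) by unfold_locales (auto simp: label_mean_def prob_space)
qed

context
  fixes D :: "('a \<times> bool) measure" and f1 f2 :: "real \<Rightarrow> real" and h :: "'a \<Rightarrow> real" and k :: nat
  assumes D: "prob_space D"
    and label_measurable: "(\<lambda>w. of_bool (snd w) :: real) \<in> borel_measurable D"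
    and integrable_f2: "integrable D (\<lambda>w. f2 (h (fst w)))"
    and k: "k > 0"
begin

interpretation bounded_centred_pair D "\<lambda>w. of_bool (snd w) - label_mean D"
    "\<lambda>w. f2 (h (fst w)) - (\<integral>w. f2 (h (fst w)) \<partial>D)"
  using D label_measurable integrable_f2 by (rule bounded_centred_pair_label)

lemma bag_loss_eq_bag_statistic:
  "bag_loss D f1 f2 h k s = (\<integral>w. f1 (h (fst w)) + label_mean D * f2 (h (fst w)) \<partial>D)
    + bag_statistic {..<k} s"
  using k by (simp add: bag_loss_def bag_label_def bag_statistic_def Let_def sum_subtractf field_simps)

lemma integral_bag_loss_eq_covariance:
  "(\<integral>s. bag_loss D f1 f2 h k s \<partial>PiM {..<k} (\<lambda>_. D))
    = (\<integral>w. f1 (h (fst w)) + label_mean D * f2 (h (fst w)) \<partial>D)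
      + (\<integral>w. (of_bool (snd w) - label_mean D) * (f2 (h (fst w)) - (\<integral>w. f2 (h (fst w)) \<partial>D)) \<partial>D)"
proof -
  interpret S: prob_space "PiM {..<k} (\<lambda>_. D)"
    by (simp add: prob_space_PiM D)
  have I: "finite {..<k}" "{..<k} \<noteq> {}"
    using k by auto
  show ?thesis
    using integrable_bag_statistic[OF I] integral_bag_statistic[OF I]
    by (simp add: bag_loss_eq_bag_statistic S.prob_space)
qed

lemma integral_bag_loss:
  assumes "integrable D (\<lambda>w. f1 (h (fst w)))"
  shows "(\<integral>s. bag_loss D f1 f2 h k s \<partial>PiM {..<k} (\<lambda>_. D))
    = (\<integral>w. f1 (h (fst w)) + of_bool (snd w) * f2 (h (fst w)) \<partial>D)"
proof -
  let ?p = "label_mean D" and ?g = "\<lambda>w. f2 (h (fst w))"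
  have ag: "integrable D (\<lambda>w. (of_bool (snd w) - ?p) * ?g w)"
    using integrable_f2 by (rule integrable_a_times)
  have "(\<integral>w. (of_bool (snd w) - ?p) * (?g w - (\<integral>w. ?g w \<partial>D)) \<partial>D)
      = (\<integral>w. (of_bool (snd w) - ?p) * ?g w \<partial>D)"
    unfolding right_diff_distrib using ag integrable_a expectation_a
    by (simp add: mult.commute[of _ "\<integral>w. ?g w \<partial>D"])
  moreover have "(\<integral>w. f1 (h (fst w)) + of_bool (snd w) * ?g w \<partial>D)
      = (\<integral>w. (f1 (h (fst w)) + ?p * ?g w) + (of_bool (snd w) - ?p) * ?g w \<partial>D)"
    by (rule Bochner_Integration.integral_cong) (simp_all add: algebra_simps)
  ultimately show ?thesis
    using assms integrable_f2 ag by (simp add: integral_bag_loss_eq_covariance)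
qed

lemma nn_integral_bag_loss_variance_le:
  "(\<integral>\<^sup>+s. ennreal ((bag_loss D f1 f2 h k s
      - (\<integral>t. bag_loss D f1 f2 h k t \<partial>PiM {..<k} (\<lambda>_. D)))\<^sup>2) \<partial>PiM {..<k} (\<lambda>_. D))
    \<le> 2 * (\<integral>\<^sup>+w. ennreal ((f2 (h (fst w)))\<^sup>2) \<partial>D)"
proof -
  have "finite {..<k}" "{..<k} \<noteq> {}"
    using k by auto
  then have "(\<integral>\<^sup>+s. ennreal ((bag_loss D f1 f2 h k s
      - (\<integral>t. bag_loss D f1 f2 h k t \<partial>PiM {..<k} (\<lambda>_. D)))\<^sup>2) \<partial>PiM {..<k} (\<lambda>_. D))
    \<le> 2 * (\<integral>\<^sup>+w. ennreal ((f2 (h (fst w)) - (\<integral>w. f2 (h (fst w)) \<partial>D))\<^sup>2) \<partial>D)"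
    unfolding integral_bag_loss_eq_covariance unfolding bag_loss_eq_bag_statistic
    by (simp add: nn_integral_bag_statistic_variance_le)
  also have "\<dots> \<le> 2 * (\<integral>\<^sup>+w. ennreal ((f2 (h (fst w)))\<^sup>2) \<partial>D)"
    using prob_space.nn_integral_centred_sq_le[OF D integrable_f2] by (intro mult_left_mono) simp_all
  finally show ?thesis .
qed

end

theorem lemma1:
  fixes X :: "'a measure" and D :: "('a \<times> bool) measure"
    and h :: "'a \<Rightarrow> real" and f1 f2 :: "real \<Rightarrow> real" and k :: nat
  assumes "prob_space D"
    and "sets D = sets (X \<Otimes>\<^sub>M count_space UNIV)"
    and "h \<in> borel_measurable X"
    and "\<And>x. x \<in> space X \<Longrightarrow> h x \<in> {0..1}"
    and "integrable D (\<lambda>w. f1 (h (fst w)))"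
    and "integrable D (\<lambda>w. f2 (h (fst w)))"
    and "k \<ge> 1"
  shows "(\<integral>s. bag_loss D f1 f2 h k s \<partial>(PiM {..<k} (\<lambda>_. D)))
           = (\<integral>w. f1 (h (fst w)) + of_bool (snd w) * f2 (h (fst w)) \<partial>D)
         \<and> (\<integral>\<^sup>+s. ennreal ((bag_loss D f1 f2 h k s
              - (\<integral>t. bag_loss D f1 f2 h k t \<partial>(PiM {..<k} (\<lambda>_. D))))\<^sup>2)
            \<partial>(PiM {..<k} (\<lambda>_. D)))
         \<le> ennreal (5/2) * (\<integral>\<^sup>+w. ennreal ((f2 (h (fst w)))\<^sup>2) \<partial>D)"
proof -
  have label_measurable: "(\<lambda>w. of_bool (snd w) :: real) \<in> borel_measurable D"
    unfolding measurable_cong_sets[OF assms(2) refl] by measurable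
  have k: "k > 0"
    using assms(7) by simp
  have "(2 :: ennreal) \<le> ennreal (5/2)"
    by (simp add: ennreal_leI)
  then show ?thesis
    using integral_bag_loss[OF assms(1) label_measurable assms(6) k assms(5)]
      nn_integral_bag_loss_variance_le[of D f2 h k f1, OF assms(1) label_measurable assms(6) k]
    by (meson mult_right_mono order_trans zero_le)
qed

end
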